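(* Let $B>1$ and $k>0$. There is a number $c>0$ (depending on $B$ and $k$) such that the following holds. Let $\Omega\subset\mathbb R^d$ be compact, $\mu$ a probability measure on $\Omega$, and $X_N$ an $N$-dimensional subspace of $\mathcal C(\Omega)$ such that for every $q\in[2,\infty)$ one has $\|f\|_\infty\le BN^{k/q}\|f\|_q$ for all $f\in X_N$. Then for every integer $m\ge\frac{c}{[\log B]^2}N^{k+2}[\log N]^2$ there are $m$ points $\xi^1,\dots,\xi^m\in\Omega$ such that $$ \|f\|_\infty\le2B^{k+1}\max_{1\le j\le m}|f(\xi^j)|\qquad\forall f\in X_N. $$
   Context: $\|f\|_q=(\int_\Omega|f|^qd\mu)^{1/q}$ and $\|f\|_\infty=\max_{\mathbf x\in\Omega}|f(\mathbf x)|$. *)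

theory Defs
  imports "HOL-Analysis.Analysis" "HOL-Probability.Probability" "HOL-Library.Function_Algebras"
begin

text \<open>Pointwise scalar multiplication of real-valued functions; with the pointwise
  addition from Function_Algebras this makes functions a real vector space.\<close>
definition fun_scale :: "real \<Rightarrow> ('a \<Rightarrow> real) \<Rightarrow> 'a \<Rightarrow> real" where
  "fun_scale c f = (\<lambda>x. c * f x)"

text \<open>Points of R^d, realised as real sequences vanishing from index d on.\<close>
definition Rd :: "nat \<Rightarrow> (nat \<Rightarrow> real) set" where
  "Rd d = {x. \<forall>i\<ge>d. x i = 0}"

definition Lq_norm :: "'a measure \<Rightarrow> real \<Rightarrow> ('a \<Rightarrow> real) \<Rightarrow> real" where
  "Lq_norm \<mu> q f = (\<integral>x. \<bar>f x\<bar> powr q \<partial>\<mu>) powr (1 / q)"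

definition sup_norm :: "'a set \<Rightarrow> ('a \<Rightarrow> real) \<Rightarrow> real" where
  "sup_norm \<Omega> f = Sup ((\<lambda>x. \<bar>f x\<bar>) ` \<Omega>)"

end

theory Submission
  imports Defs
begin

text \<open>Let t = B^-(k+1). For g in X, the Nikolskii inequality at an exponent q close to
  log_B N, together with the splitting of the integral of |g|^q at the level t ||g||, shows that
  the set where |g| >= t ||g|| has measure at least some p of order N^-(k+1) / B^2. Expanding in
  an L^2(mu)-orthonormal basis of X, whose elements are bounded by B N^(k/2), and rounding the
  coefficients to a grid yields a (t/4)-net of the unit sphere of X with N^O(N) elements.
  Points chosen greedily, each lying in at least a p-fraction of the level sets not yet hit,
  meet the level set of every net element once card net * (1 - p)^m < 1, which holds for m of
  order N^(k+2) (log N)^2 / (log B)^2. If f is within t/4 of a net element g and xi_j lies in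
  the level set of g, then |f(xi_j)| >= t/2 ||f||. In dimension at most one a single maximising
  point suffices.\<close>

interpretation fun_vs: vector_space fun_scale
  by unfold_locales (auto simp: fun_scale_def fun_eq_iff algebra_simps)

lemma fun_scale_apply [simp]: "fun_scale c f x = c * f x"
  by (simp add: fun_scale_def)

lemma sum_apply: "sum F A x = (\<Sum>i\<in>A. F i x)"
  for F :: "'i \<Rightarrow> 'a \<Rightarrow> 'b::comm_monoid_add"
  by (induct A rule: infinite_finite_induct) auto

lemma Lq_norm_two: "Lq_norm \<mu> 2 f = sqrt (\<integral>x. f x * f x \<partial>\<mu>)"
proof -
  have "\<bar>f x\<bar> powr 2 = f x * f x" for x
    by (simp add: power2_eq_square)
  moreover have "(\<integral>x. f x * f x \<partial>\<mu>) \<ge> 0"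
    by (rule integral_nonneg_AE) simp
  ultimately show ?thesis
    by (simp add: Lq_norm_def powr_half_sqrt)
qed

lemma sup_norm_eq_abs:
  assumes "x \<in> S" and "\<And>y. y \<in> S \<Longrightarrow> \<bar>h y\<bar> \<le> \<bar>h x\<bar>"
  shows "sup_norm S h = \<bar>h x\<bar>"
  unfolding sup_norm_def using assms by (intro cSup_eq_maximum) auto

lemma cube_grid_cover:
  fixes \<delta> :: real
  assumes "\<delta> > 0"
  obtains C :: "(nat \<Rightarrow> real) set"
  where "finite C" and "real (card C) \<le> (2 / \<delta> + 3) ^ n"
    and "\<And>a. (\<forall>i<n. \<bar>a i\<bar> \<le> 1) \<Longrightarrow> \<exists>c\<in>C. \<forall>i<n. \<bar>a i - c i\<bar> \<le> \<delta>"
proof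
  define K where "K = \<lceil>1 / \<delta>\<rceil>"
  define Z where "Z = PiE {..<n} (\<lambda>_. {-K..K})"
  define C where "C = (\<lambda>z i. \<delta> * of_int (z i)) ` Z"
  show "finite C"
    by (simp add: C_def Z_def finite_PiE)
  have "K \<ge> 1"
    using assms by (simp add: K_def le_ceiling_iff)
  have "card C \<le> card Z"
    unfolding C_def by (rule card_image_le) (simp add: Z_def finite_PiE)
  then have "real (card C) \<le> real (card Z)"
    by simp
  also have "\<dots> = (2 * real_of_int K + 1) ^ n"
    using \<open>K \<ge> 1\<close> by (simp add: Z_def card_PiE)
  also have "\<dots> \<le> (2 / \<delta> + 3) ^ n"
  proof -
    have "real_of_int K \<le> 1 / \<delta> + 1"
      unfolding K_def by (rule of_int_ceiling_le_add_one)
    then show ?thesis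
      using \<open>K \<ge> 1\<close> by (intro power_mono) auto
  qed
  finally show "real (card C) \<le> (2 / \<delta> + 3) ^ n" .
  fix a :: "nat \<Rightarrow> real"
  assume a: "\<forall>i<n. \<bar>a i\<bar> \<le> 1"
  define z where "z i = (if i < n then \<lfloor>a i / \<delta>\<rfloor> else undefined)" for i
  have z_in_C: "(\<lambda>i. \<delta> * of_int (z i)) \<in> C"
    unfolding C_def
  proof (rule imageI)
    have "\<lfloor>a i / \<delta>\<rfloor> \<in> {-K..K}" if "i < n" for i
    proof -
      have "- 1 / \<delta> \<le> a i / \<delta>" "a i / \<delta> \<le> 1 / \<delta>"
        using a that assms by (auto simp: divide_le_eq le_divide_eq abs_le_iff)
      moreover have "1 / \<delta> \<le> real_of_int K"
        unfolding K_def by (rule le_of_int_ceiling)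
      ultimately show ?thesis
        by (simp add: floor_le_iff le_floor_iff)
    qed
    then show "z \<in> Z"
      by (auto simp: Z_def z_def PiE_def extensional_def)
  qed
  have "\<bar>a i - \<delta> * of_int (z i)\<bar> \<le> \<delta>" if "i < n" for i
  proof -
    have "\<delta> * (a i / \<delta>) = a i"
      using assms by simp
    moreover have "\<delta> * of_int \<lfloor>a i / \<delta>\<rfloor> \<le> \<delta> * (a i / \<delta>)"
      by (rule mult_left_mono[OF of_int_floor_le less_imp_le[OF assms]])
    moreover have "\<delta> * (a i / \<delta>) < \<delta> * (of_int \<lfloor>a i / \<delta>\<rfloor> + 1)"
      using floor_correct[of "a i / \<delta>"] assms by (intro mult_strict_left_mono) simp_all
    ultimately show ?thesis
      using that by (simp add: z_def abs_le_iff ring_distribs)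
  qed
  then show "\<exists>c\<in>C. \<forall>i<n. \<bar>a i - c i\<bar> \<le> \<delta>"
    using z_in_C by (intro bexI) auto
qed

section \<open>Hitting events by a greedy sample\<close>

lemma (in prob_space) exists_point_in_many_events:
  assumes "finite F" and "\<And>a. a \<in> F \<Longrightarrow> A a \<in> events" and "\<And>a. a \<in> F \<Longrightarrow> p \<le> prob (A a)"
  shows "\<exists>x\<in>space M. real (card F) * p \<le> real (card {a\<in>F. x \<in> A a})"
proof -
  define h where "h x = real (card {a\<in>F. x \<in> A a})" for x
  have h_sum: "h x = (\<Sum>a\<in>F. indicator (A a) x)" for x
    using assms(1) by (simp add: h_def indicator_def sum.If_cases Int_def)
  have "h ` space M \<subseteq> real ` {..card F}"
    using assms(1) by (auto simp: h_def intro!: card_mono)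
  then have "finite (h ` space M)"
    by (rule finite_subset) simp
  moreover have "Max (h ` space M) \<in> h ` space M"
    using \<open>finite (h ` space M)\<close> not_empty by (intro Max_in) auto
  then obtain x where x: "x \<in> space M" and "h x = Max (h ` space M)"
    by auto
  ultimately have x_max: "h y \<le> h x" if "y \<in> space M" for y
    using that by simp
  have "real (card F) * p \<le> (\<Sum>a\<in>F. prob (A a))"
    using assms(3) sum_mono[of F "\<lambda>_. p"] by simp
  also have "\<dots> = expectation h"
    unfolding h_sum using assms(1,2)
    by (subst Bochner_Integration.integral_sum) (auto simp: less_top[symmetric])
  also have "\<dots> \<le> expectation (\<lambda>_. h x)"
    unfolding h_sum using assms(1,2) x_max[unfolded h_sum]
    by (intro integral_mono) (auto intro!: integrable_sum simp: less_top[symmetric])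
  also have "\<dots> = h x"
    by (simp add: prob_space)
  finally show ?thesis
    using x by (auto simp: h_def)
qed

text \<open>Each new point lies in at least a fraction \<open>p\<close> of the events not yet hit.\<close>

lemma (in prob_space) points_hitting_all_events:
  assumes "finite F" and "\<And>a. a \<in> F \<Longrightarrow> A a \<in> events" and "\<And>a. a \<in> F \<Longrightarrow> p \<le> prob (A a)"
    and "p \<le> 1" and "real (card F) * (1 - p) ^ m < 1"
  shows "\<exists>\<xi>. (\<forall>j\<in>{1..m}. \<xi> j \<in> space M) \<and> (\<forall>a\<in>F. \<exists>j\<in>{1..m}. \<xi> j \<in> A a)"
  using assms(1-3,5)
proof (induction m arbitrary: F)
  case 0
  then show ?case
    by simp
next
  case (Suc m)
  obtain x where x: "x \<in> space M" and many: "real (card F) * p \<le> real (card {a\<in>F. x \<in> A a})"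
    using exists_point_in_many_events[of F A p] Suc.prems by blast
  define F' where "F' = {a\<in>F. x \<notin> A a}"
  have "card F = card {a\<in>F. x \<in> A a} + card F'"
    unfolding F'_def using Suc.prems(1) by (subst card_Un_disjoint[symmetric]) (auto intro: arg_cong[where f=card])
  then have "real (card F') * (1 - p) ^ m \<le> real (card F) * (1 - p) * (1 - p) ^ m"
    using many assms(4) by (intro mult_right_mono) (auto simp: algebra_simps)
  also have "\<dots> < 1"
    using Suc.prems(4) by (simp add: algebra_simps)
  finally obtain \<xi> where \<xi>: "\<forall>j\<in>{1..m}. \<xi> j \<in> space M" "\<forall>a\<in>F'. \<exists>j\<in>{1..m}. \<xi> j \<in> A a"
    using Suc.IH[of F'] Suc.prems(1-3) unfolding F'_def by auto
  show ?case
  proof (intro exI[of _ "\<xi>(Suc m := x)"] conjI ballI)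
    show "(\<xi>(Suc m := x)) j \<in> space M" if "j \<in> {1..Suc m}" for j
      using that x \<xi>(1) by auto
    show "\<exists>j\<in>{1..Suc m}. (\<xi>(Suc m := x)) j \<in> A a" if a: "a \<in> F" for a
    proof (cases "x \<in> A a")
      case True
      then show ?thesis
        by (intro bexI[of _ "Suc m"]) auto
    next
      case False
      then obtain j where "j \<in> {1..m}" "\<xi> j \<in> A a"
        using a \<xi>(2) by (auto simp: F'_def)
      then show ?thesis
        by (intro bexI[of _ j]) auto
    qed
  qed
qed

lemma power_mult_power_one_minus_less_one:
  fixes a p :: real
  assumes "a > 0" "p \<le> 1" "real N * ln a < p * real m"
  shows "a ^ N * (1 - p) ^ m < 1"
proof -
  have "(1 - p) ^ m \<le> exp (-p) ^ m"
    using assms(2) by (intro power_mono) (auto simp: exp_ge_add_one_self[of "-p", simplified])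
  then have "a ^ N * (1 - p) ^ m \<le> exp (real N * ln a) * exp (- (p * real m))"
    using assms(1) by (auto intro!: mult_left_mono simp: exp_of_nat_mult exp_of_nat_mult[symmetric] mult.commute)
  also have "\<dots> < 1"
    using assms(3) by (simp flip: exp_add)
  finally show ?thesis .
qed

section \<open>The parameters\<close>

text \<open>The exponent at which the Nikolskii inequality is applied, the resulting lower bound for
  the measure of a level set, and the mesh of the coefficient grid.\<close>

definition sampling_exponent :: "real \<Rightarrow> real \<Rightarrow> nat \<Rightarrow> real" where
  "sampling_exponent B k N = 2 + ln (real N) / ln B + ln 2 / (k * ln B)"

definition hit_probability :: "real \<Rightarrow> real \<Rightarrow> nat \<Rightarrow> real" where
  "hit_probability B k N = B powr (- sampling_exponent B k N) * real N powr (-k) / 2"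

definition grid_step :: "real \<Rightarrow> real \<Rightarrow> nat \<Rightarrow> real" where
  "grid_step B k N = B powr (-(k + 1)) / (4 * real N * B * real N powr (k / 2))"

lemma sampling_exponent_ge_two:
  assumes "B > 1" "k > 0" "N > 0"
  shows "sampling_exponent B k N \<ge> 2"
  using assms by (simp add: sampling_exponent_def)

lemma level_powr_le_hit_probability:
  assumes "B > 1" "k > 0" "N > 0"
  shows "(B powr (-(k + 1))) powr sampling_exponent B k N \<le> hit_probability B k N"
proof -
  define q where "q = sampling_exponent B k N"
  have "k * q * ln B = 2 * k * ln B + k * ln (real N) + ln 2"
    using assms by (simp add: q_def sampling_exponent_def field_simps)
  then have "B powr (- (k * q)) = B powr (-2 * k) * real N powr (-k) / 2"
    using assms by (simp add: powr_def exp_add exp_diff field_simps flip: exp_add)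
  also have "\<dots> \<le> real N powr (-k) / 2"
    using assms ge_one_powr_ge_zero[of B "2 * k"] by (simp add: powr_minus_divide divide_le_eq)
  finally have "B powr (-q) * B powr (- (k * q)) \<le> B powr (-q) * (real N powr (-k) / 2)"
    by (rule mult_left_mono) simp
  moreover have "(B powr (-(k + 1))) powr q = B powr (-q) * B powr (- (k * q))"
    unfolding powr_powr powr_add[symmetric] by (simp add: algebra_simps)
  ultimately show ?thesis
    by (simp add: hit_probability_def q_def)
qed

lemma hit_probability_eq:
  assumes "B > 1" "k > 0" "N > 0"
  shows "hit_probability B k N = 1 / (2 * B\<^sup>2 * 2 powr (1 / k) * real N powr (k + 1))"
proof -
  have "sampling_exponent B k N * ln B = 2 * ln B + ln (real N) + ln 2 / k"
    using assms by (simp add: sampling_exponent_def field_simps)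
  then have "B powr sampling_exponent B k N = B powr 2 * real N * 2 powr (1 / k)"
    using assms by (simp add: powr_def exp_add mult.commute)
  moreover have "real N powr (k + 1) = real N powr k * real N"
    using assms by (simp add: powr_add)
  ultimately show ?thesis
    using assms by (simp add: hit_probability_def powr_minus_divide)
qed

lemma hit_probability_le_one:
  assumes "B > 1" "k > 0" "N > 0"
  shows "hit_probability B k N \<le> 1"
proof -
  have "1 * 1 \<le> B\<^sup>2 * 2 powr (1 / k)"
    using assms by (intro mult_mono) (auto intro: one_le_power ge_one_powr_ge_zero)
  moreover have "1 \<le> real N powr (k + 1)"
    using assms by (intro ge_one_powr_ge_zero) auto
  ultimately have "1 * 1 \<le> (2 * B\<^sup>2 * 2 powr (1 / k)) * real N powr (k + 1)"
    by (intro mult_mono) auto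
  then show ?thesis
    using assms by (simp add: hit_probability_eq)
qed

lemma inverse_grid_step:
  assumes "B > 1" "N > 0"
  shows "1 / grid_step B k N = 4 * B powr (k + 2) * real N powr (1 + k / 2)"
proof -
  have "B powr (-(k + 1)) = 1 / B powr (k + 1)"
    by (rule powr_minus_divide)
  moreover have "B powr (k + 2) = B powr (k + 1) * B" "real N powr (1 + k / 2) = real N * real N powr (k / 2)"
    using assms by (simp_all add: powr_add power2_eq_square)
  ultimately show ?thesis
    using assms by (simp add: grid_step_def)
qed

lemma ln_grid_count_le:
  assumes "B > 1" "k > 0" "N \<ge> 2"
  shows "ln (2 / grid_step B k N + 3) \<le> ((ln 20 + (k + 2) * ln B) / ln 2 + 1 + k / 2) * ln (real N)"
proof -
  define \<delta> where "\<delta> = grid_step B k N"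
  have inv_\<delta>: "1 / \<delta> = 4 * B powr (k + 2) * real N powr (1 + k / 2)"
    using assms by (simp add: \<delta>_def inverse_grid_step)
  have "1 * 1 \<le> B powr (k + 2) * real N powr (1 + k / 2)"
    using assms by (intro mult_mono) (auto intro: ge_one_powr_ge_zero)
  then have "1 \<le> 1 / \<delta>"
    unfolding inv_\<delta> by linarith
  then have \<delta>: "\<delta> > 0"
    by (metis zero_less_divide_1_iff zero_less_one order_less_le_trans)
  with \<open>1 \<le> 1 / \<delta>\<close> have "2 / \<delta> + 3 \<le> 5 / \<delta>"
    by (simp add: field_simps)
  have "5 / \<delta> = 5 * (1 / \<delta>)"
    by simp
  then have "5 / \<delta> = 20 * (B powr (k + 2) * real N powr (1 + k / 2))"
    unfolding inv_\<delta> by simp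
  then have "ln (5 / \<delta>) = ln 20 + (k + 2) * ln B + (1 + k / 2) * ln (real N)"
    using assms by (simp add: ln_mult)
  moreover have "ln (2 / \<delta> + 3) \<le> ln (5 / \<delta>)"
    using \<delta> \<open>2 / \<delta> + 3 \<le> 5 / \<delta>\<close> by (simp add: add_pos_pos)
  ultimately have "ln (2 / \<delta> + 3) \<le> ln 20 + (k + 2) * ln B + (1 + k / 2) * ln (real N)"
    by simp
  also have "\<dots> \<le> ((ln 20 + (k + 2) * ln B) / ln 2 + 1 + k / 2) * ln (real N)"
  proof -
    have "ln 2 \<le> ln (real N)"
      using assms by simp
    moreover have "0 \<le> ln 20 + (k + 2) * ln B"
      using assms by simp
    ultimately have "ln 20 + (k + 2) * ln B \<le> (ln 20 + (k + 2) * ln B) * (ln (real N) / ln 2)"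
      by (intro mult_le_cancel_left1[THEN iffD2]) simp
    then show ?thesis
      by (simp add: algebra_simps add_divide_distrib)
  qed
  finally show ?thesis
    by (simp add: \<delta>_def)
qed

lemma sample_size_suffices:
  assumes "B > 1" "k > 0"
  obtains c where "c > 0"
    and "\<And>N m. N \<ge> 2 \<Longrightarrow> c / (ln B)\<^sup>2 * real N powr (k + 2) * (ln (real N))\<^sup>2 \<le> real m \<Longrightarrow>
           (2 / grid_step B k N + 3) ^ N * (1 - hit_probability B k N) ^ m < 1"
proof
  define L where "L = ln B"
  define C where "C = (ln 20 + (k + 2) * L) / ln 2 + 1 + k / 2"
  define D where "D = 2 * B\<^sup>2 * 2 powr (1 / k)"
  have L: "L > 0"
    using assms by (simp add: L_def)
  then have C: "C > 0"
    using assms by (simp add: C_def add_pos_pos)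
  have D: "D > 0"
    using assms by (simp add: D_def)
  show "2 * C * D * L\<^sup>2 / ln 2 > 0"
    using L C D by simp
  fix N m :: nat
  assume N: "N \<ge> 2" and m: "2 * C * D * L\<^sup>2 / ln 2 / (ln B)\<^sup>2 * real N powr (k + 2) * (ln (real N))\<^sup>2 \<le> real m"
  define l where "l = ln (real N)"
  define p where "p = hit_probability B k N"
  have l: "l \<ge> ln 2" and l_pos: "l > 0"
    using N by (auto simp: l_def intro: less_le_trans[OF ln_gt_zero[of 2]])
  have p: "p = 1 / (D * real N powr (k + 1))"
    using assms N by (simp add: p_def D_def hit_probability_eq)
  have "ln (2 / grid_step B k N + 3) \<le> C * l"
    using ln_grid_count_le[OF assms N] by (simp add: C_def L_def l_def)
  then have "real N * ln (2 / grid_step B k N + 3) < 2 * C * real N * l"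
    using N mult_pos_pos[OF C l_pos] by simp
  also have "\<dots> \<le> p * real m"
  proof -
    have "l \<le> l\<^sup>2 / ln 2"
      using l l_pos by (simp add: power2_eq_square pos_le_divide_eq)
    then have "2 * C * real N * l \<le> 2 * C * real N * (l\<^sup>2 / ln 2)"
      using C by (intro mult_left_mono) auto
    also have "\<dots> = p * (2 * C * D * L\<^sup>2 / ln 2 / L\<^sup>2 * real N powr (k + 2) * l\<^sup>2)"
      using D L N powr_add[of "real N" "k + 1" 1] by (simp add: p field_simps)
    also have "\<dots> \<le> p * real m"
      using m p D by (intro mult_left_mono) (auto simp: L_def l_def)
    finally show ?thesis .
  qed
  finally have "real N * ln (2 / grid_step B k N + 3) < p * real m" .
  moreover have "p \<le> 1"
    using hit_probability_le_one[OF assms] N by (simp add: p_def)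
  moreover have "grid_step B k N > 0"
    using assms N by (simp add: grid_step_def)
  ultimately show "(2 / grid_step B k N + 3) ^ N * (1 - hit_probability B k N) ^ m < 1"
    by (intro power_mult_power_one_minus_less_one) (auto simp: p_def intro: add_pos_pos)
qed

section \<open>Continuous functions in L2\<close>

locale continuous_L2 = finite_measure \<mu> for \<mu> :: "'a::topological_space measure" +
  fixes \<Omega> :: "'a set"
  assumes compact_\<Omega>: "compact \<Omega>" and space_eq: "space \<mu> = \<Omega>"
    and sets_eq: "sets \<mu> = sets (restrict_space borel \<Omega>)"
begin

lemma continuous_measurable:
  fixes h :: "'a \<Rightarrow> real"
  assumes "continuous_on \<Omega> h"
  shows "h \<in> borel_measurable \<mu>"
  using borel_measurable_continuous_on_restrict[OF assms] measurable_cong_sets[OF sets_eq refl] by blast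

lemma continuous_bounded:
  fixes h :: "'a \<Rightarrow> real"
  assumes "continuous_on \<Omega> h"
  shows "bdd_above ((\<lambda>x. \<bar>h x\<bar>) ` \<Omega>)"
  using compact_imp_bounded[OF compact_continuous_image[OF assms compact_\<Omega>]]
  by (auto simp: bdd_above_def bounded_iff)

lemma abs_le_sup_norm:
  fixes h :: "'a \<Rightarrow> real"
  assumes "continuous_on \<Omega> h" and "x \<in> \<Omega>"
  shows "\<bar>h x\<bar> \<le> sup_norm \<Omega> h"
  unfolding sup_norm_def using continuous_bounded[OF assms(1)] assms(2) by (rule cSUP_upper2) simp

lemma continuous_integrable:
  fixes h :: "'a \<Rightarrow> real"
  assumes "continuous_on \<Omega> h"
  shows "integrable \<mu> h"
  using abs_le_sup_norm[OF assms] continuous_measurable[OF assms] space_eq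
  by (intro integrable_const_bound[where B="sup_norm \<Omega> h"]) auto

definition L2_inner :: "('a \<Rightarrow> real) \<Rightarrow> ('a \<Rightarrow> real) \<Rightarrow> real" where
  "L2_inner f g = (\<integral>x. f x * g x \<partial>\<mu>)"

lemma L2_inner_commute: "L2_inner f g = L2_inner g f"
  by (simp add: L2_inner_def mult.commute)

lemma L2_inner_self_nonneg: "L2_inner f f \<ge> 0"
  unfolding L2_inner_def by (rule integral_nonneg_AE) simp

lemma L2_inner_scale_left: "L2_inner (fun_scale c f) g = c * L2_inner f g"
  by (simp add: L2_inner_def mult.assoc)

lemma L2_inner_scale_right: "L2_inner f (fun_scale c g) = c * L2_inner f g"
  by (simp add: L2_inner_def algebra_simps)

lemma L2_inner_add_left:
  assumes "continuous_on \<Omega> f" "continuous_on \<Omega> g" "continuous_on \<Omega> h"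
  shows "L2_inner (f + g) h = L2_inner f h + L2_inner g h"
  unfolding L2_inner_def plus_fun_apply distrib_right using assms
  by (intro Bochner_Integration.integral_add continuous_integrable continuous_intros)

lemma L2_inner_diff_left:
  assumes "continuous_on \<Omega> f" "continuous_on \<Omega> g" "continuous_on \<Omega> h"
  shows "L2_inner (f - g) h = L2_inner f h - L2_inner g h"
  unfolding L2_inner_def fun_diff_def left_diff_distrib using assms
  by (intro Bochner_Integration.integral_diff continuous_integrable continuous_intros)

lemma L2_inner_sum_left:
  assumes "\<And>i. i \<in> I \<Longrightarrow> continuous_on \<Omega> (f i)" "continuous_on \<Omega> h"
  shows "L2_inner (\<Sum>i\<in>I. f i) h = (\<Sum>i\<in>I. L2_inner (f i) h)"
  unfolding L2_inner_def sum_apply sum_distrib_right using assms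
  by (intro Bochner_Integration.integral_sum continuous_integrable continuous_intros)

lemma L2_inner_definite_if_sup_norm_le:
  assumes "continuous_on \<Omega> f" and "\<And>x. x \<notin> \<Omega> \<Longrightarrow> f x = 0"
    and "sup_norm \<Omega> f \<le> C * Lq_norm \<mu> 2 f" and "L2_inner f f = 0"
  shows "f = 0"
proof
  fix x
  have "sup_norm \<Omega> f \<le> 0"
    using assms(3,4) by (simp add: Lq_norm_two L2_inner_def)
  then show "f x = 0 x"
    using abs_le_sup_norm[OF assms(1), of x] assms(2) by (cases "x \<in> \<Omega>") auto
qed

lemma integral_powr_le_level_set:
  fixes h :: "'a \<Rightarrow> real"
  assumes h: "continuous_on \<Omega> h" and "q > 0" "s \<ge> 0"
  shows "(\<integral>x. \<bar>h x\<bar> powr q \<partial>\<mu>)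
    \<le> measure \<mu> \<Omega> * s powr q + sup_norm \<Omega> h powr q * measure \<mu> {x\<in>\<Omega>. s \<le> \<bar>h x\<bar>}"
proof -
  define A where "A = {x\<in>\<Omega>. s \<le> \<bar>h x\<bar>}"
  have A: "A \<in> sets \<mu>"
    unfolding A_def space_eq[symmetric] using continuous_measurable[OF h] by measurable
  have bound: "\<bar>h x\<bar> powr q \<le> s powr q + sup_norm \<Omega> h powr q * indicator A x" if "x \<in> \<Omega>" for x
  proof (cases "x \<in> A")
    case True
    then show ?thesis
      using abs_le_sup_norm[OF h that] assms by (simp add: add_increasing powr_mono2)
  next
    case False
    then show ?thesis
      using that assms by (simp add: A_def powr_mono2)
  qed
  have "(\<lambda>x. \<bar>h x\<bar> powr q) \<in> borel_measurable \<mu>"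
    using continuous_measurable[OF h] by measurable
  then have "integrable \<mu> (\<lambda>x. \<bar>h x\<bar> powr q)"
    using abs_le_sup_norm[OF h] space_eq assms(2)
    by (intro integrable_const_bound[where B="sup_norm \<Omega> h powr q"] AE_I2) (auto intro: powr_mono2)
  then have "(\<integral>x. \<bar>h x\<bar> powr q \<partial>\<mu>) \<le> (\<integral>x. s powr q + sup_norm \<Omega> h powr q * indicator A x \<partial>\<mu>)"
    using bound A space_eq by (intro integral_mono) (auto simp: less_top[symmetric])
  also have "\<dots> = measure \<mu> \<Omega> * s powr q + sup_norm \<Omega> h powr q * measure \<mu> A"
    using A space_eq by (simp add: less_top[symmetric] Int_absorb2 A_def)
  finally show ?thesis
    by (simp add: A_def)
qed

end

section \<open>Orthonormal bases\<close>

locale L2_subspace = continuous_L2 +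
  fixes X :: "('a \<Rightarrow> real) set"
  assumes X_continuous: "X \<subseteq> {f. continuous_on \<Omega> f \<and> (\<forall>x. x \<notin> \<Omega> \<longrightarrow> f x = 0)}"
    and X_subspace: "fun_vs.subspace X"
    and L2_inner_definite: "\<And>f. f \<in> X \<Longrightarrow> L2_inner f f = 0 \<Longrightarrow> f = 0"
begin

lemma continuous_on_X: "f \<in> X \<Longrightarrow> continuous_on \<Omega> f"
  using X_continuous by auto

definition orthonormal :: "nat \<Rightarrow> (nat \<Rightarrow> 'a \<Rightarrow> real) \<Rightarrow> bool" where
  "orthonormal n u \<longleftrightarrow>
     (\<forall>i<n. u i \<in> X) \<and> (\<forall>i<n. \<forall>j<n. L2_inner (u i) (u j) = (if i = j then 1 else 0))"

definition expansion :: "nat \<Rightarrow> (nat \<Rightarrow> 'a \<Rightarrow> real) \<Rightarrow> ('a \<Rightarrow> real) \<Rightarrow> 'a \<Rightarrow> real" where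
  "expansion n u f = (\<Sum>i<n. fun_scale (L2_inner f (u i)) (u i))"

lemma expansion_apply: "expansion n u f x = (\<Sum>i<n. L2_inner f (u i) * u i x)"
  by (simp add: expansion_def sum_apply)

lemma expansion_in_X: "(\<And>i. i < n \<Longrightarrow> u i \<in> X) \<Longrightarrow> expansion n u f \<in> X"
  unfolding expansion_def using X_subspace by (intro fun_vs.subspace_sum fun_vs.subspace_scale) auto

lemma L2_inner_expansion_left:
  assumes "\<And>i. i < n \<Longrightarrow> u i \<in> X" and "continuous_on \<Omega> h"
  shows "L2_inner (expansion n u f) h = (\<Sum>i<n. L2_inner f (u i) * L2_inner (u i) h)"
  unfolding expansion_def using assms continuous_on_X
  by (subst L2_inner_sum_left)
    (auto intro: continuous_on_mult_left continuous_on_X simp: L2_inner_scale_left)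

lemma L2_inner_expansion_basis:
  assumes "orthonormal n u" "j < n"
  shows "L2_inner (expansion n u f) (u j) = L2_inner f (u j)"
  using assms continuous_on_X
  by (simp add: L2_inner_expansion_left orthonormal_def if_distrib[of "\<lambda>x. _ * x"] cong: if_cong)

lemma orthonormal_extend:
  assumes u: "orthonormal n u" and "v \<in> X" "v \<noteq> 0"
    and orth: "\<And>j. j < n \<Longrightarrow> L2_inner v (u j) = 0"
  defines "w \<equiv> fun_scale (1 / sqrt (L2_inner v v)) v"
  shows "orthonormal (Suc n) (u(n := w))"
    and "\<And>f. expansion (Suc n) (u(n := w)) f = expansion n u f + fun_scale (L2_inner f w) w"
    and "fun_scale (L2_inner v w) w = v"
    and "\<And>j. j < n \<Longrightarrow> L2_inner (u j) w = 0"
proof -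
  define r where "r = sqrt (L2_inner v v)"
  have "L2_inner v v \<noteq> 0"
    using L2_inner_definite \<open>v \<in> X\<close> \<open>v \<noteq> 0\<close> by blast
  then have r: "r > 0" "r * r = L2_inner v v"
    using L2_inner_self_nonneg[of v] by (simp_all add: r_def)
  have w: "w = fun_scale (1 / r) v"
    by (simp add: w_def r_def)
  have "w \<in> X"
    unfolding w using X_subspace \<open>v \<in> X\<close> by (rule fun_vs.subspace_scale)
  have vw: "L2_inner v w = r"
    unfolding w L2_inner_scale_right using r by (simp add: field_simps)
  have "L2_inner w w = 1"
    unfolding w L2_inner_scale_left L2_inner_scale_right r(2)[symmetric] using r(1) by simp
  moreover show "L2_inner (u j) w = 0" if "j < n" for j
    unfolding w L2_inner_scale_right using orth[OF that] by (simp add: L2_inner_commute[of "u j"])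
  moreover have "L2_inner w (u j) = 0" if "j < n" for j
    unfolding w L2_inner_scale_left using orth[OF that] by simp
  ultimately show "orthonormal (Suc n) (u(n := w))"
    using u \<open>w \<in> X\<close> unfolding orthonormal_def by (auto simp: less_Suc_eq)
  show "expansion (Suc n) (u(n := w)) f = expansion n u f + fun_scale (L2_inner f w) w" for f
    by (simp add: expansion_def)
  show "fun_scale (L2_inner v w) w = v"
    unfolding vw using r(1) by (simp add: w fun_eq_iff)
qed

lemma gram_schmidt_step:
  assumes u: "orthonormal n u" and "b \<in> X"
  obtains n' u' where "n' \<le> Suc n" and "orthonormal n' u'" and "expansion n' u' b = b"
    and "\<And>s. expansion n u s = s \<Longrightarrow> expansion n' u' s = s"
proof -
  have uX: "\<And>i. i < n \<Longrightarrow> u i \<in> X"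
    using u by (simp add: orthonormal_def)
  define v where "v = b - expansion n u b"
  have "v \<in> X"
    unfolding v_def using X_subspace \<open>b \<in> X\<close> expansion_in_X[OF uX] by (rule fun_vs.subspace_diff)
  have orth: "L2_inner v (u j) = 0" if "j < n" for j
    unfolding v_def using that uX \<open>b \<in> X\<close>
    by (simp add: L2_inner_diff_left continuous_on_X expansion_in_X L2_inner_expansion_basis[OF u])
  show ?thesis
  proof (cases "v = 0")
    case True
    then show ?thesis
      using that[of n u] u by (simp add: v_def)
  next
    case False
    define w where "w = fun_scale (1 / sqrt (L2_inner v v)) v"
    note extend = orthonormal_extend[OF u \<open>v \<in> X\<close> False orth, folded w_def]
    have "w \<in> X"
      using extend(1) by (auto simp: orthonormal_def)
    have expansion_w: "L2_inner (expansion n u f) w = 0" for f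
      using uX \<open>w \<in> X\<close> continuous_on_X extend(4) by (simp add: L2_inner_expansion_left)
    have "L2_inner b w = L2_inner v w"
      unfolding v_def using uX \<open>b \<in> X\<close> \<open>w \<in> X\<close> expansion_w
      by (simp add: L2_inner_diff_left continuous_on_X expansion_in_X)
    then have "expansion (Suc n) (u(n := w)) b = b"
      using extend(2,3) by (simp add: v_def)
    moreover have "expansion (Suc n) (u(n := w)) s = s" if "expansion n u s = s" for s
      using expansion_w[of s] that extend(2) by (simp add: fun_eq_iff)
    ultimately show ?thesis
      using that[of "Suc n" "u(n := w)"] extend(1) by blast
  qed
qed

lemma gram_schmidt:
  assumes "finite S" "S \<subseteq> X"
  shows "\<exists>n u. n \<le> card S \<and> orthonormal n u \<and> (\<forall>s\<in>S. expansion n u s = s)"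
  using assms
proof (induction S rule: finite_induct)
  case empty
  show ?case
    by (intro exI[of _ 0]) (simp add: orthonormal_def)
next
  case (insert b S)
  then obtain n u where n: "n \<le> card S" and u: "orthonormal n u"
    and fixed: "\<forall>s\<in>S. expansion n u s = s"
    by auto
  obtain n' u' where "n' \<le> Suc n" "orthonormal n' u'" "expansion n' u' b = b"
    and "\<And>s. expansion n u s = s \<Longrightarrow> expansion n' u' s = s"
    using gram_schmidt_step[OF u] insert.prems by blast
  then show ?case
    using n fixed insert.hyps by (intro exI[of _ n'] exI[of _ u']) auto
qed

lemma expansion_fixed_subspace:
  assumes "orthonormal n u"
  shows "fun_vs.subspace {f \<in> X. expansion n u f = f}"
proof (rule fun_vs.subspaceI)
  have uX: "\<And>i. i < n \<Longrightarrow> u i \<in> X"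
    using assms by (simp add: orthonormal_def)
  show "0 \<in> {f \<in> X. expansion n u f = f}"
    using fun_vs.subspace_0[OF X_subspace] by (simp add: expansion_def L2_inner_def)
  show "f + g \<in> {f \<in> X. expansion n u f = f}" if "f \<in> {f \<in> X. expansion n u f = f}"
    and "g \<in> {f \<in> X. expansion n u f = f}" for f g
  proof -
    have "f \<in> X" "g \<in> X"
      using that by auto
    then have "expansion n u (f + g) = expansion n u f + expansion n u g"
      using uX continuous_on_X
      by (simp add: fun_eq_iff expansion_apply L2_inner_add_left distrib_right sum.distrib)
    then show ?thesis
      using that fun_vs.subspace_add[OF X_subspace] by (auto simp: fun_eq_iff)
  qed
  show "fun_scale c f \<in> {f \<in> X. expansion n u f = f}" if "f \<in> {f \<in> X. expansion n u f = f}" for c f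
  proof -
    have "expansion n u (fun_scale c f) x = c * expansion n u f x" for x
      by (simp add: expansion_apply L2_inner_scale_left sum_distrib_left mult.assoc)
    then show ?thesis
      using that fun_vs.subspace_scale[OF X_subspace] by (auto simp: fun_eq_iff)
  qed
qed

lemma orthonormal_basis_exists:
  assumes "fun_vs.dim X > 0"
  shows "\<exists>n u. n \<le> fun_vs.dim X \<and> orthonormal n u \<and> (\<forall>f\<in>X. expansion n u f = f)"
proof -
  obtain Bs where Bs: "Bs \<subseteq> X" "X \<subseteq> fun_vs.span Bs" "card Bs = fun_vs.dim X"
    using fun_vs.basis_exists[of X] by metis
  then have "finite Bs"
    using assms card.infinite by fastforce
  then obtain n u where n: "n \<le> card Bs" and u: "orthonormal n u"
    and fixed: "\<forall>s\<in>Bs. expansion n u s = s"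
    using gram_schmidt Bs(1) by blast
  have "fun_vs.span Bs \<subseteq> {f \<in> X. expansion n u f = f}"
    using Bs(1) fixed by (intro fun_vs.span_minimal expansion_fixed_subspace[OF u]) auto
  then have "\<forall>f\<in>X. expansion n u f = f"
    using Bs(2) by blast
  then show ?thesis
    using Bs(3) n u by auto
qed

end

section \<open>Subspaces satisfying a Nikolskii inequality\<close>

locale nikolskii_subspace = L2_subspace \<mu> \<Omega> X + prob_space \<mu>
  for \<mu> :: "'a::topological_space measure" and \<Omega> and X +
  fixes N :: nat and B k :: real
  assumes dim_X: "fun_vs.dim X = N" and B_gt_1: "B > 1" and k_pos: "k > 0"
    and nikolskii: "\<And>q f. q \<ge> 2 \<Longrightarrow> f \<in> X \<Longrightarrow> sup_norm \<Omega> f \<le> B * real N powr (k / q) * Lq_norm \<mu> q f"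
begin

lemma \<Omega>_nonempty: "\<Omega> \<noteq> {}"
  using not_empty space_eq by simp

lemma sup_norm_attained:
  fixes h :: "'a \<Rightarrow> real"
  assumes "continuous_on \<Omega> h"
  obtains x where "x \<in> \<Omega>" and "sup_norm \<Omega> h = \<bar>h x\<bar>"
proof -
  have "continuous_on \<Omega> (\<lambda>x. \<bar>h x\<bar>)"
    using assms by (rule continuous_on_rabs)
  then obtain x where "x \<in> \<Omega>" "\<And>y. y \<in> \<Omega> \<Longrightarrow> \<bar>h y\<bar> \<le> \<bar>h x\<bar>"
    using continuous_attains_sup[OF compact_\<Omega> \<Omega>_nonempty] by blast
  then show ?thesis
    using that[of x] sup_norm_eq_abs[of x \<Omega> h] by simp
qed

lemma sup_norm_nonneg:
  assumes "continuous_on \<Omega> h"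
  shows "0 \<le> sup_norm \<Omega> h"
proof -
  obtain x where "sup_norm \<Omega> h = \<bar>h x\<bar>"
    using sup_norm_attained[OF assms] .
  then show ?thesis
    by simp
qed

lemma sup_norm_fun_scale:
  fixes h :: "'a \<Rightarrow> real"
  assumes "continuous_on \<Omega> h"
  shows "sup_norm \<Omega> (fun_scale c h) = \<bar>c\<bar> * sup_norm \<Omega> h"
proof -
  obtain x where x: "x \<in> \<Omega>" "sup_norm \<Omega> h = \<bar>h x\<bar>"
    using sup_norm_attained[OF assms] .
  have "\<bar>c * h y\<bar> \<le> \<bar>c * h x\<bar>" if "y \<in> \<Omega>" for y
    unfolding abs_mult using abs_le_sup_norm[OF assms that] x(2) by (intro mult_left_mono) simp_all
  then have "sup_norm \<Omega> (fun_scale c h) = \<bar>fun_scale c h x\<bar>"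
    using x by (intro sup_norm_eq_abs) auto
  then show ?thesis
    using x by (simp add: abs_mult)
qed

lemma orthonormal_abs_le:
  assumes "orthonormal n u" "i < n" "x \<in> \<Omega>"
  shows "\<bar>u i x\<bar> \<le> B * real N powr (k / 2)"
proof -
  have "u i \<in> X" "L2_inner (u i) (u i) = 1"
    using assms by (auto simp: orthonormal_def)
  then have "sup_norm \<Omega> (u i) \<le> B * real N powr (k / 2)"
    using nikolskii[of 2 "u i"] by (simp add: Lq_norm_two L2_inner_def)
  then show ?thesis
    using abs_le_sup_norm[OF continuous_on_X[OF \<open>u i \<in> X\<close>] assms(3)] by linarith
qed

lemma abs_L2_inner_le_one:
  assumes f: "continuous_on \<Omega> f" "sup_norm \<Omega> f \<le> 1"
    and u: "continuous_on \<Omega> u" "L2_inner u u = 1"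
  shows "\<bar>L2_inner f u\<bar> \<le> 1"
proof -
  have "\<bar>L2_inner f u\<bar> \<le> (\<integral>x. \<bar>f x * u x\<bar> \<partial>\<mu>)"
    unfolding L2_inner_def using integral_norm_bound[of \<mu> "\<lambda>x. f x * u x"] by simp
  also have "\<dots> \<le> (\<integral>x. (1 + u x * u x) / 2 \<partial>\<mu>)"
  proof (rule integral_mono)
    show "integrable \<mu> (\<lambda>x. \<bar>f x * u x\<bar>)" "integrable \<mu> (\<lambda>x. (1 + u x * u x) / 2)"
      using f u by (intro continuous_integrable continuous_intros; simp)+
    fix x
    assume "x \<in> space \<mu>"
    then have "\<bar>f x\<bar> \<le> 1"
      using abs_le_sup_norm[OF f(1)] f(2) space_eq by fastforce
    then have "\<bar>f x * u x\<bar> \<le> \<bar>u x\<bar>"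
      by (simp add: abs_mult mult_left_le_one_le)
    also have "\<bar>u x\<bar> \<le> (1 + u x * u x) / 2"
    proof -
      have "0 \<le> (\<bar>u x\<bar> - 1) * (\<bar>u x\<bar> - 1)" "\<bar>u x\<bar> * \<bar>u x\<bar> = u x * u x"
        by simp_all
      then show ?thesis
        by (simp add: algebra_simps)
    qed
    finally show "\<bar>f x * u x\<bar> \<le> (1 + u x * u x) / 2" .
  qed
  also have "\<dots> = (1 + L2_inner u u) / 2"
  proof -
    have "integrable \<mu> (\<lambda>x. u x * u x)"
      using u by (intro continuous_integrable continuous_intros)
    then show ?thesis
      by (simp add: L2_inner_def prob_space)
  qed
  finally show ?thesis
    using u by simp
qed

lemma abs_sub_expansion_le:
  assumes u: "orthonormal n u" and "n \<le> N" and "x \<in> \<Omega>" and "0 \<le> \<delta>"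
    and close: "\<And>i. i < n \<Longrightarrow> \<bar>L2_inner f (u i) - c i\<bar> \<le> \<delta>"
  shows "\<bar>expansion n u f x - (\<Sum>i<n. c i * u i x)\<bar> \<le> real N * \<delta> * (B * real N powr (k / 2))"
proof -
  have "expansion n u f x - (\<Sum>i<n. c i * u i x) = (\<Sum>i<n. (L2_inner f (u i) - c i) * u i x)"
    by (simp add: expansion_apply sum_subtractf left_diff_distrib)
  also have "\<bar>\<dots>\<bar> \<le> (\<Sum>i<n. \<delta> * (B * real N powr (k / 2)))"
    using close orthonormal_abs_le[OF u _ \<open>x \<in> \<Omega>\<close>] \<open>0 \<le> \<delta>\<close>
    by (intro order_trans[OF sum_abs sum_mono]) (simp add: abs_mult mult_mono)
  also have "\<dots> \<le> real N * (\<delta> * (B * real N powr (k / 2)))"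
    using \<open>n \<le> N\<close> \<open>0 \<le> \<delta>\<close> B_gt_1 by (simp add: mult_right_mono)
  finally show ?thesis
    by (simp add: mult.assoc)
qed

lemma unit_ball_net:
  assumes "\<delta> > 0" and "N > 0"
  obtains G where "finite G" and "G \<subseteq> X" and "real (card G) \<le> (2 / \<delta> + 3) ^ N"
    and "\<And>f. f \<in> X \<Longrightarrow> sup_norm \<Omega> f \<le> 1 \<Longrightarrow>
      \<exists>g\<in>G. \<forall>x\<in>\<Omega>. \<bar>f x - g x\<bar> \<le> real N * \<delta> * (B * real N powr (k / 2))"
proof -
  obtain n u where n: "n \<le> N" and u: "orthonormal n u" and expand: "\<forall>f\<in>X. expansion n u f = f"
    using orthonormal_basis_exists assms(2) dim_X by auto
  have uX: "\<And>i. i < n \<Longrightarrow> u i \<in> X"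
    using u by (simp add: orthonormal_def)
  obtain C where C: "finite C" "real (card C) \<le> (2 / \<delta> + 3) ^ n"
    and cover: "\<And>a. (\<forall>i<n. \<bar>a i\<bar> \<le> 1) \<Longrightarrow> \<exists>c\<in>C. \<forall>i<n. \<bar>a i - c i\<bar> \<le> \<delta>"
    using cube_grid_cover[OF assms(1)] by blast
  define comb where "comb c = (\<Sum>i<n. fun_scale (c i) (u i))" for c
  show ?thesis
  proof
    show "finite (comb ` C)"
      using C(1) by simp
    show "comb ` C \<subseteq> X"
      unfolding comb_def using X_subspace uX by (auto intro!: fun_vs.subspace_sum fun_vs.subspace_scale)
    have "real (card (comb ` C)) \<le> real (card C)"
      using card_image_le[OF C(1)] by simp
    also have "\<dots> \<le> (2 / \<delta> + 3) ^ N"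
    proof -
      have "(2 / \<delta> + 3) ^ n \<le> (2 / \<delta> + 3) ^ N"
        using n assms(1) by (intro power_increasing) auto
      then show ?thesis
        using C(2) by linarith
    qed
    finally show "real (card (comb ` C)) \<le> (2 / \<delta> + 3) ^ N" .
    fix f
    assume f: "f \<in> X" "sup_norm \<Omega> f \<le> 1"
    have "\<bar>L2_inner f (u i)\<bar> \<le> 1" if "i < n" for i
      using u that f continuous_on_X uX
      by (intro abs_L2_inner_le_one) (auto simp: orthonormal_def)
    then obtain c where c: "c \<in> C" and close: "\<And>i. i < n \<Longrightarrow> \<bar>L2_inner f (u i) - c i\<bar> \<le> \<delta>"
      using cover[of "\<lambda>i. L2_inner f (u i)"] by blast
    have "\<bar>f x - comb c x\<bar> \<le> real N * \<delta> * (B * real N powr (k / 2))" if "x \<in> \<Omega>" for x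
      using abs_sub_expansion_le[OF u n that _ close] assms(1) expand f(1) by (simp add: comb_def sum_apply)
    then show "\<exists>g\<in>comb ` C. \<forall>x\<in>\<Omega>. \<bar>f x - g x\<bar> \<le> real N * \<delta> * (B * real N powr (k / 2))"
      using c by blast
  qed
qed

lemma measure_level_set_ge:
  assumes g: "g \<in> X" "sup_norm \<Omega> g > 0" and q: "q \<ge> 2"
    and t: "t \<ge> 0" "t powr q \<le> B powr (-q) * real N powr (-k) / 2"
  shows "B powr (-q) * real N powr (-k) / 2 \<le> measure \<mu> {x\<in>\<Omega>. t * sup_norm \<Omega> g \<le> \<bar>g x\<bar>}"
proof -
  define G where "G = sup_norm \<Omega> g"
  define I where "I = (\<integral>x. \<bar>g x\<bar> powr q \<partial>\<mu>)"
  define A where "A = {x\<in>\<Omega>. t * G \<le> \<bar>g x\<bar>}"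
  have G: "G > 0"
    using g by (simp add: G_def)
  have "N > 0"
  proof (rule ccontr)
    assume "\<not> N > 0"
    then show False
      using nikolskii[OF q g(1)] g(2) by simp
  qed
  have I: "I \<ge> 0"
    unfolding I_def by (rule integral_nonneg_AE) simp
  have "G powr q \<le> (B * real N powr (k / q) * I powr (1 / q)) powr q"
    using nikolskii[OF q g(1)] G q by (intro powr_mono2) (auto simp: G_def I_def Lq_norm_def)
  also have "\<dots> = B powr q * real N powr k * I"
    using B_gt_1 \<open>N > 0\<close> I q by (simp add: powr_mult powr_powr)
  finally have lower: "G powr q * (B powr (-q) * real N powr (-k)) \<le> I"
    using B_gt_1 \<open>N > 0\<close> by (simp add: powr_minus field_simps)
  have "I \<le> (t * G) powr q + G powr q * measure \<mu> A"
    using integral_powr_le_level_set[OF continuous_on_X[OF g(1)], of q "t * G"] t G q prob_space space_eq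
    by (simp add: I_def A_def G_def)
  with lower have "G powr q * (B powr (-q) * real N powr (-k)) \<le> G powr q * (t powr q + measure \<mu> A)"
    using t G by (simp add: powr_mult algebra_simps)
  then have "B powr (-q) * real N powr (-k) \<le> t powr q + measure \<mu> A"
    using G by simp
  then show ?thesis
    using t by (simp add: A_def G_def)
qed

lemma sample_hitting_level_sets:
  fixes q t p :: real and m :: nat
  assumes G: "finite G" "G \<subseteq> X" and q: "q \<ge> 2" and t: "0 \<le> t" "t powr q \<le> p"
    and p: "p \<le> B powr (-q) * real N powr (-k) / 2" "p \<le> 1"
    and count: "real (card G) * (1 - p) ^ m < 1"
  shows "\<exists>\<xi>. (\<forall>j\<in>{1..m}. \<xi> j \<in> \<Omega>) \<and>
    (\<forall>g\<in>G. 0 < sup_norm \<Omega> g \<longrightarrow> (\<exists>j\<in>{1..m}. t * sup_norm \<Omega> g \<le> \<bar>g (\<xi> j)\<bar>))"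
proof -
  define F where "F = {g\<in>G. sup_norm \<Omega> g > 0}"
  define A where "A g = {x\<in>\<Omega>. t * sup_norm \<Omega> g \<le> \<bar>g x\<bar>}" for g
  have "A g \<in> events" if "g \<in> F" for g
  proof -
    have "g \<in> borel_measurable \<mu>"
      using that G(2) by (intro continuous_measurable continuous_on_X) (auto simp: F_def)
    then show ?thesis
      unfolding A_def space_eq[symmetric] by measurable
  qed
  moreover have "p \<le> prob (A g)" if "g \<in> F" for g
    using that G(2) measure_level_set_ge[of g q t] q t p unfolding A_def F_def by fastforce
  moreover have "real (card F) * (1 - p) ^ m < 1"
  proof -
    have "real (card F) * (1 - p) ^ m \<le> real (card G) * (1 - p) ^ m"
      using G(1) p(2) by (intro mult_right_mono) (auto simp: F_def intro: card_mono)
    then show ?thesis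
      using count by linarith
  qed
  ultimately obtain \<xi> where "\<forall>j\<in>{1..m}. \<xi> j \<in> \<Omega>" "\<forall>g\<in>F. \<exists>j\<in>{1..m}. \<xi> j \<in> A g"
    using points_hitting_all_events[of F A p m] G(1) p(2) space_eq by (auto simp: F_def)
  then show ?thesis
    by (auto simp: F_def A_def)
qed

lemma sampling_unit_sphere:
  fixes q t \<delta> p :: real and m :: nat
  assumes N: "N > 0" and t: "0 < t" "t \<le> 1" and q: "q \<ge> 2" "t powr q \<le> p"
    and p: "p \<le> B powr (-q) * real N powr (-k) / 2" "p \<le> 1"
    and \<delta>: "\<delta> > 0" "4 * (real N * \<delta> * (B * real N powr (k / 2))) \<le> t"
    and count: "(2 / \<delta> + 3) ^ N * (1 - p) ^ m < 1"
  shows "\<exists>\<xi>. (\<forall>j\<in>{1..m}. \<xi> j \<in> \<Omega>) \<and>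
    (\<forall>f\<in>X. sup_norm \<Omega> f = 1 \<longrightarrow> (\<exists>j\<in>{1..m}. t / 2 \<le> \<bar>f (\<xi> j)\<bar>))"
proof -
  define \<epsilon> where "\<epsilon> = real N * \<delta> * (B * real N powr (k / 2))"
  have \<epsilon>: "0 \<le> \<epsilon>" "4 * \<epsilon> \<le> t"
    using \<delta> B_gt_1 by (simp_all add: \<epsilon>_def)
  obtain G where G: "finite G" "G \<subseteq> X" "real (card G) \<le> (2 / \<delta> + 3) ^ N"
    and net: "\<And>f. f \<in> X \<Longrightarrow> sup_norm \<Omega> f \<le> 1 \<Longrightarrow> \<exists>g\<in>G. \<forall>x\<in>\<Omega>. \<bar>f x - g x\<bar> \<le> \<epsilon>"
    using unit_ball_net[OF \<delta>(1) N] unfolding \<epsilon>_def by blast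
  have "real (card G) * (1 - p) ^ m \<le> (2 / \<delta> + 3) ^ N * (1 - p) ^ m"
    using G(3) p(2) by (intro mult_right_mono) auto
  then have "real (card G) * (1 - p) ^ m < 1"
    using count by linarith
  then obtain \<xi> where \<xi>: "\<forall>j\<in>{1..m}. \<xi> j \<in> \<Omega>"
    and hit: "\<And>g. g \<in> G \<Longrightarrow> 0 < sup_norm \<Omega> g \<Longrightarrow> \<exists>j\<in>{1..m}. t * sup_norm \<Omega> g \<le> \<bar>g (\<xi> j)\<bar>"
    using sample_hitting_level_sets[OF G(1,2) q(1) less_imp_le[OF t(1)] q(2) p] by blast
  have "\<exists>j\<in>{1..m}. t / 2 \<le> \<bar>f (\<xi> j)\<bar>" if f: "f \<in> X" "sup_norm \<Omega> f = 1" for f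
  proof -
    obtain g where "g \<in> G" and close: "\<And>x. x \<in> \<Omega> \<Longrightarrow> \<bar>f x - g x\<bar> \<le> \<epsilon>"
      using net[OF f(1)] f(2) by auto
    obtain x where "x \<in> \<Omega>" "sup_norm \<Omega> f = \<bar>f x\<bar>"
      using sup_norm_attained[OF continuous_on_X[OF f(1)]] .
    moreover have "continuous_on \<Omega> g"
      using \<open>g \<in> G\<close> G(2) continuous_on_X by auto
    ultimately have "1 - \<epsilon> \<le> sup_norm \<Omega> g"
      using close abs_le_sup_norm f(2) by fastforce
    then obtain j where j: "j \<in> {1..m}" "t * sup_norm \<Omega> g \<le> \<bar>g (\<xi> j)\<bar>"
      using hit[OF \<open>g \<in> G\<close>] \<epsilon> t by force
    have "t * (1 - \<epsilon>) \<le> t * sup_norm \<Omega> g"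
      using \<open>1 - \<epsilon> \<le> sup_norm \<Omega> g\<close> t by simp
    moreover have "t * \<epsilon> \<le> \<epsilon>"
      using \<epsilon> t by (simp add: mult_left_le_one_le)
    ultimately have "t / 2 \<le> \<bar>f (\<xi> j)\<bar>"
      using j(2) close[of "\<xi> j"] \<xi> j(1) \<epsilon> by (simp add: algebra_simps)
    then show ?thesis
      using j(1) by blast
  qed
  then show ?thesis
    using \<xi> by blast
qed

lemma sup_norm_le_Max_if_unit_sphere:
  assumes "c > 0" "finite J" "J \<noteq> {}" "f \<in> X"
    and unit: "\<And>g. g \<in> X \<Longrightarrow> sup_norm \<Omega> g = 1 \<Longrightarrow> \<exists>j\<in>J. c \<le> \<bar>g (\<xi> j)\<bar>"
  shows "c * sup_norm \<Omega> f \<le> Max ((\<lambda>j. \<bar>f (\<xi> j)\<bar>) ` J)"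
proof -
  define S where "S = sup_norm \<Omega> f"
  have f: "continuous_on \<Omega> f"
    using assms(4) by (rule continuous_on_X)
  have Max_ge: "\<bar>f (\<xi> j)\<bar> \<le> Max ((\<lambda>j. \<bar>f (\<xi> j)\<bar>) ` J)" if "j \<in> J" for j
    using assms(2) that by (intro Max_ge) auto
  show ?thesis
  proof (cases "S = 0")
    case True
    then show ?thesis
      using Max_ge assms(3) by (force simp: S_def)
  next
    case False
    then have "S > 0"
      using sup_norm_nonneg[OF f] by (simp add: S_def)
    have "fun_scale (1 / S) f \<in> X"
      using X_subspace assms(4) by (rule fun_vs.subspace_scale)
    moreover have "sup_norm \<Omega> (fun_scale (1 / S) f) = 1"
      using \<open>S > 0\<close> by (simp add: sup_norm_fun_scale[OF f] S_def)
    ultimately obtain j where "j \<in> J" "c \<le> \<bar>fun_scale (1 / S) f (\<xi> j)\<bar>"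
      using unit by blast
    then have "c \<le> \<bar>f (\<xi> j)\<bar> / S"
      using \<open>S > 0\<close> by (simp add: abs_mult)
    then have "c * S \<le> \<bar>f (\<xi> j)\<bar>"
      using \<open>S > 0\<close> by (simp add: pos_le_divide_eq)
    then show ?thesis
      using Max_ge[OF \<open>j \<in> J\<close>] by (simp add: S_def)
  qed
qed

lemma vanishing_or_line_if_dim_le_one:
  assumes "N \<le> 1"
  shows "(\<forall>f\<in>X. sup_norm \<Omega> f = 0) \<or> (\<exists>v\<in>X. \<forall>f\<in>X. f = fun_scale (L2_inner f v) v)"
proof (cases "N = 0")
  case True
  have "sup_norm \<Omega> f = 0" if "f \<in> X" for f
  proof (rule antisym)
    show "sup_norm \<Omega> f \<le> 0"
      using nikolskii[of 2 f] that True by simp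
    show "0 \<le> sup_norm \<Omega> f"
      using sup_norm_nonneg[OF continuous_on_X[OF that]] .
  qed
  then show ?thesis
    by blast
next
  case False
  then have "\<exists>n u. n \<le> N \<and> orthonormal n u \<and> (\<forall>f\<in>X. expansion n u f = f)"
    using orthonormal_basis_exists dim_X by simp
  then obtain n u where n: "n \<le> 1" and u: "orthonormal n u"
    and expand: "\<forall>f\<in>X. expansion n u f = f"
    using assms le_trans by blast
  show ?thesis
  proof (cases "n = 0")
    case True
    have "sup_norm \<Omega> f = 0" if "f \<in> X" for f
    proof -
      have "f = 0"
        using expand that True by (auto simp: expansion_def)
      then show ?thesis
        using \<Omega>_nonempty by (simp add: sup_norm_def)
    qed
    then show ?thesis
      by blast
  next
    case False
    with n have "n = 1"
      by simp
    then have "u 0 \<in> X"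
      using u by (simp add: orthonormal_def)
    moreover have "f = fun_scale (L2_inner f (u 0)) (u 0)" if "f \<in> X" for f
      using expand that \<open>n = 1\<close> by (simp add: expansion_def)
    ultimately show ?thesis
      by blast
  qed
qed

lemma norming_point_if_dim_le_one:
  assumes "N \<le> 1"
  obtains x where "x \<in> \<Omega>" and "\<And>f. f \<in> X \<Longrightarrow> sup_norm \<Omega> f = \<bar>f x\<bar>"
  using vanishing_or_line_if_dim_le_one[OF assms]
proof
  assume vanishing: "\<forall>f\<in>X. sup_norm \<Omega> f = 0"
  obtain x where "x \<in> \<Omega>"
    using \<Omega>_nonempty by blast
  moreover have "sup_norm \<Omega> f = \<bar>f x\<bar>" if "f \<in> X" for f
    using vanishing that abs_le_sup_norm[OF continuous_on_X[OF that] \<open>x \<in> \<Omega>\<close>] by simp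
  ultimately show ?thesis
    by (rule that)
next
  assume "\<exists>v\<in>X. \<forall>f\<in>X. f = fun_scale (L2_inner f v) v"
  then obtain v where "v \<in> X" and v: "\<And>f. f \<in> X \<Longrightarrow> f = fun_scale (L2_inner f v) v"
    by blast
  have v_cont: "continuous_on \<Omega> v"
    using \<open>v \<in> X\<close> by (rule continuous_on_X)
  obtain x where x: "x \<in> \<Omega>" "sup_norm \<Omega> v = \<bar>v x\<bar>"
    using sup_norm_attained[OF v_cont] .
  have "sup_norm \<Omega> f = \<bar>f x\<bar>" if "f \<in> X" for f
  proof -
    define c where "c = L2_inner f v"
    have f: "f = fun_scale c v"
      unfolding c_def by (rule v[OF that])
    show ?thesis
      using x(2) by (simp add: f sup_norm_fun_scale[OF v_cont] abs_mult)
  qed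
  with x(1) show ?thesis
    by (rule that)
qed

lemma norming_sample_if_dim_ge_two:
  assumes "N \<ge> 2" and count: "(2 / grid_step B k N + 3) ^ N * (1 - hit_probability B k N) ^ m < 1"
  shows "\<exists>\<xi>. (\<forall>j\<in>{1..m}. \<xi> j \<in> \<Omega>) \<and>
    (\<forall>f\<in>X. sup_norm \<Omega> f \<le> 2 * B powr (k + 1) * Max ((\<lambda>j. \<bar>f (\<xi> j)\<bar>) ` {1..m}))"
proof -
  define t where "t = B powr (-(k + 1))"
  have "1 \<le> B powr (k + 1)"
    using B_gt_1 k_pos by (intro ge_one_powr_ge_zero) auto
  moreover have "t = 1 / B powr (k + 1)"
    unfolding t_def by (rule powr_minus_divide)
  ultimately have t: "0 < t" "t \<le> 1" "2 * B powr (k + 1) = 2 / t"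
    using B_gt_1 by simp_all
  have "grid_step B k N > 0"
    using B_gt_1 assms(1) by (simp add: grid_step_def)
  have "\<exists>\<xi>. (\<forall>j\<in>{1..m}. \<xi> j \<in> \<Omega>) \<and>
    (\<forall>f\<in>X. sup_norm \<Omega> f = 1 \<longrightarrow> (\<exists>j\<in>{1..m}. t / 2 \<le> \<bar>f (\<xi> j)\<bar>))"
  proof (rule sampling_unit_sphere)
    show "N > 0" "2 \<le> sampling_exponent B k N"
      using assms(1) B_gt_1 k_pos sampling_exponent_ge_two by auto
    show "t powr sampling_exponent B k N \<le> hit_probability B k N"
      using level_powr_le_hit_probability[of B k N] B_gt_1 k_pos assms(1) by (simp add: t_def)
    show "hit_probability B k N \<le> 1"
      using hit_probability_le_one[of B k N] B_gt_1 k_pos assms(1) by simp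
    show "4 * (real N * grid_step B k N * (B * real N powr (k / 2))) \<le> t"
      using B_gt_1 assms(1) by (simp add: grid_step_def t_def)
  qed (use t count \<open>grid_step B k N > 0\<close> in \<open>auto simp: hit_probability_def\<close>)
  then obtain \<xi> where \<xi>: "\<forall>j\<in>{1..m}. \<xi> j \<in> \<Omega>"
    and unit: "\<And>f. f \<in> X \<Longrightarrow> sup_norm \<Omega> f = 1 \<Longrightarrow> \<exists>j\<in>{1..m}. t / 2 \<le> \<bar>f (\<xi> j)\<bar>"
    by blast
  have "m \<noteq> 0"
  proof
    assume "m = 0"
    then have "(2 / grid_step B k N + 3) ^ N < 1"
      using count by simp
    moreover have "1 \<le> (2 / grid_step B k N + 3) ^ N"
      using \<open>grid_step B k N > 0\<close> by (intro one_le_power) simp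
    ultimately show False
      by simp
  qed
  have "sup_norm \<Omega> f \<le> 2 * B powr (k + 1) * Max ((\<lambda>j. \<bar>f (\<xi> j)\<bar>) ` {1..m})"
    if "f \<in> X" for f
  proof -
    have "t / 2 * sup_norm \<Omega> f \<le> Max ((\<lambda>j. \<bar>f (\<xi> j)\<bar>) ` {1..m})"
      using t \<open>m \<noteq> 0\<close> that unit by (intro sup_norm_le_Max_if_unit_sphere) auto
    then show ?thesis
      unfolding t(3) using t(1) by (simp add: field_simps)
  qed
  then show ?thesis
    using \<xi> by blast
qed

lemma norming_sample:
  assumes "m \<ge> 1"
    and count: "N \<ge> 2 \<Longrightarrow> (2 / grid_step B k N + 3) ^ N * (1 - hit_probability B k N) ^ m < 1"
  shows "\<exists>\<xi>. (\<forall>j\<in>{1..m}. \<xi> j \<in> \<Omega>) \<and>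
    (\<forall>f\<in>X. sup_norm \<Omega> f \<le> 2 * B powr (k + 1) * Max ((\<lambda>j. \<bar>f (\<xi> j)\<bar>) ` {1..m}))"
proof (cases "N \<ge> 2")
  case True
  then show ?thesis
    using count[OF True] by (rule norming_sample_if_dim_ge_two)
next
  case False
  then have "N \<le> 1"
    by simp
  then obtain x where x: "x \<in> \<Omega>" and norming: "\<And>f. f \<in> X \<Longrightarrow> sup_norm \<Omega> f = \<bar>f x\<bar>"
    using norming_point_if_dim_le_one by blast
  have "1 \<le> 2 * B powr (k + 1)"
    using B_gt_1 k_pos ge_one_powr_ge_zero[of B "k + 1"] by simp
  then have "sup_norm \<Omega> f \<le> 2 * B powr (k + 1) * Max ((\<lambda>j. \<bar>f x\<bar>) ` {1..m})" if "f \<in> X" for f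
    using norming[OF that] \<open>m \<ge> 1\<close> by (simp add: image_constant_conv mult_le_cancel_right1)
  then show ?thesis
    using x by (intro exI[of _ "\<lambda>_. x"]) auto
qed

end

lemma nikolskii_subspaceI:
  fixes \<mu> :: "'a::topological_space measure"
  assumes "compact \<Omega>" "prob_space \<mu>" "space \<mu> = \<Omega>" "sets \<mu> = sets (restrict_space borel \<Omega>)"
    and X: "X \<subseteq> {f. continuous_on \<Omega> f \<and> (\<forall>x. x \<notin> \<Omega> \<longrightarrow> f x = 0)}" "fun_vs.subspace X"
      "fun_vs.dim X = N"
    and "B > 1" "k > 0"
    and nikolskii: "\<And>q f. q \<ge> 2 \<Longrightarrow> f \<in> X \<Longrightarrow> sup_norm \<Omega> f \<le> B * real N powr (k / q) * Lq_norm \<mu> q f"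
  shows "nikolskii_subspace \<mu> \<Omega> X N B k"
proof -
  interpret continuous_L2 \<mu> \<Omega>
    using prob_space.finite_measure assms(1-4) by (intro continuous_L2.intro continuous_L2_axioms.intro)
  show ?thesis
  proof (intro nikolskii_subspace.intro L2_subspace.intro L2_subspace_axioms.intro
      nikolskii_subspace_axioms.intro)
    show "f = 0" if "f \<in> X" "L2_inner f f = 0" for f
      using X(1) that nikolskii[of 2 f] by (intro L2_inner_definite_if_sup_norm_le) auto
  qed (fact | rule continuous_L2_axioms)+
qed

theorem corollary4p2:
  fixes B k :: real
  assumes "B > 1" and "k > 0"
  shows "\<exists>c>0. \<forall>(d::nat) (\<Omega>::(nat \<Rightarrow> real) set) (\<mu>::(nat \<Rightarrow> real) measure)
            (X::((nat \<Rightarrow> real) \<Rightarrow> real) set) (N::nat).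
     \<Omega> \<subseteq> Rd d \<and> compact \<Omega> \<and>
     prob_space \<mu> \<and> space \<mu> = \<Omega> \<and> sets \<mu> = sets (restrict_space borel \<Omega>) \<and>
     X \<subseteq> {f. continuous_on \<Omega> f \<and> (\<forall>x. x \<notin> \<Omega> \<longrightarrow> f x = 0)} \<and>
     Modules.module.subspace fun_scale X \<and>
     Vector_Spaces.vector_space.dim fun_scale X = N \<and>
     (\<forall>q\<ge>2. \<forall>f\<in>X. sup_norm \<Omega> f \<le> B * real N powr (k / q) * Lq_norm \<mu> q f)
     \<longrightarrow>
     (\<forall>m::nat. m \<ge> 1 \<and> real m \<ge> c / (ln B)\<^sup>2 * real N powr (k + 2) * (ln (real N))\<^sup>2 \<longrightarrow>
        (\<exists>\<xi>::nat \<Rightarrow> (nat \<Rightarrow> real). (\<forall>j\<in>{1..m}. \<xi> j \<in> \<Omega>) \<and>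
           (\<forall>f\<in>X. sup_norm \<Omega> f \<le> 2 * B powr (k + 1) * Max ((\<lambda>j. \<bar>f (\<xi> j)\<bar>) ` {1..m}))))"
proof -
  obtain c where "c > 0" and count: "\<And>N m. N \<ge> 2 \<Longrightarrow>
      c / (ln B)\<^sup>2 * real N powr (k + 2) * (ln (real N))\<^sup>2 \<le> real m \<Longrightarrow>
      (2 / grid_step B k N + 3) ^ N * (1 - hit_probability B k N) ^ m < 1"
    using sample_size_suffices[OF assms] by blast
  show ?thesis
    apply (intro exI[of _ c] conjI allI impI)
     apply (fact \<open>c > 0\<close>)
    apply (elim conjE)
    subgoal for d \<Omega> \<mu> X N m
      by (intro nikolskii_subspace.norming_sample[of \<mu> \<Omega> X N B k] nikolskii_subspaceI)
        (simp_all add: assms count)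
    done
qed

end
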